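(* For every base $b\ge 2$ there exist infinitely many $b$-wARH numbers that are not $b$-MRH numbers.
   Context: Fix a base $b\ge 2$. $s_b(N)$ is the sum of the base-$b$ digits of $N$. For a positive integer $X$, its reversal $X^R$ is the integer whose base-$b$ representation is that of $X$ written in reverse order (leading zeros of the result are dropped). A positive integer $N$ is a $b$-wARH number if there exists an integer $A\ge 0$ such that $N=(A+s_b(N))+(A+s_b(N))^R$. A positive integer $N$ is a $b$-MRH number if there exists a positive integer $M$ (a multiplicative multiplier) such that $N=(M s_b(N))\cdot (M s_b(N))^R$. *)

theory Defs
  imports Main
begin

fun digits :: "nat \<Rightarrow> nat \<Rightarrow> nat list" where
  "digits b n = (if b < 2 \<or> n = 0 then [] else n mod b # digits b (n div b))"

fun from_digits :: "nat \<Rightarrow> nat list \<Rightarrow> nat" where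
  "from_digits b [] = 0"
| "from_digits b (d # ds) = d + b * from_digits b ds"

definition digit_sum :: "nat \<Rightarrow> nat \<Rightarrow> nat" where
  "digit_sum b n = sum_list (digits b n)"

text \<open>Reversal: the number whose base-b representation is that of n reversed
  (leading zeros of the result dropped automatically by evaluation).\<close>
definition rev_num :: "nat \<Rightarrow> nat \<Rightarrow> nat" where
  "rev_num b n = from_digits b (rev (digits b n))"

definition wARH :: "nat \<Rightarrow> nat \<Rightarrow> bool" where
  "wARH b N \<longleftrightarrow> N > 0 \<and> (\<exists>A::nat. N = (A + digit_sum b N) + rev_num b (A + digit_sum b N))"

definition MRH :: "nat \<Rightarrow> nat \<Rightarrow> bool" where
  "MRH b N \<longleftrightarrow> N > 0 \<and> (\<exists>M::nat. M > 0 \<and> N = (M * digit_sum b N) * rev_num b (M * digit_sum b N))"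

end

theory Submission
  imports Defs
begin

text \<open>The witnesses are the palindromes \<open>N = b^(2k) + 1\<close>, \<open>k \<ge> 1\<close>, of digit sum 2.
  They are wARH with \<open>A = b^(2k) - 2\<close>, since \<open>A + 2 = b^(2k)\<close> has reversal 1.
  If \<open>N = 2M \<cdot> (2M)^R\<close>, then for even \<open>b\<close> the number \<open>N\<close> would be even, while for odd \<open>b\<close>
  reversal preserves parity (as \<open>X \<equiv> s_b(X) mod 2\<close>), so \<open>4\<close> would divide \<open>N \<equiv> 2 (mod 4)\<close>.\<close>

declare digits.simps [simp del]

lemma digits_0 [simp]: "digits b 0 = []"
  by (simp add: digits.simps)

lemma digits_mult_add:
  assumes "b \<ge> 2" "r < b" "b * q + r > 0"
  shows "digits b (b * q + r) = r # digits b q"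
  using assms by (subst digits.simps) simp

lemma digits_power:
  assumes "b \<ge> 2"
  shows "digits b (b ^ m) = replicate m 0 @ [1]"
proof (induction m)
  case 0
  show ?case using digits_mult_add[of b 1 0] assms by simp
next
  case (Suc m)
  have "digits b (b ^ Suc m) = digits b (b * b ^ m + 0)" by simp
  also have "\<dots> = 0 # digits b (b ^ m)" using assms by (intro digits_mult_add) auto
  finally show ?case using Suc.IH by simp
qed

lemma digits_power_plus_1:
  assumes "b \<ge> 2"
  shows "digits b (b ^ Suc m + 1) = 1 # replicate m 0 @ [1]"
  using digits_mult_add[of b 1 "b ^ m"] digits_power[OF assms, of m] assms by simp

lemma from_digits_replicate_0 [simp]: "from_digits b (replicate m 0) = 0"
  by (induction m) auto

lemma from_digits_digits: "b \<ge> 2 \<Longrightarrow> from_digits b (digits b n) = n"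
  by (induction b n rule: digits.induct) (subst digits.simps, auto)

lemma digit_sum_power_plus_1:
  assumes "b \<ge> 2" "m > 0"
  shows "digit_sum b (b ^ m + 1) = 2"
proof -
  obtain m' where "m = Suc m'" using assms(2) gr0_implies_Suc by blast
  then show ?thesis unfolding digit_sum_def using digits_power_plus_1[OF assms(1)] by simp
qed

lemma rev_num_power: "b \<ge> 2 \<Longrightarrow> rev_num b (b ^ m) = 1"
  by (simp add: rev_num_def digits_power)

lemma even_from_digits_iff: "odd b \<Longrightarrow> even (from_digits b ds) \<longleftrightarrow> even (sum_list ds)"
  by (induction ds) auto

lemma even_rev_num_iff:
  assumes "b \<ge> 2" "odd b"
  shows "even (rev_num b n) \<longleftrightarrow> even n"
proof -
  have "even (rev_num b n) \<longleftrightarrow> even (sum_list (rev (digits b n)))"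
    unfolding rev_num_def using even_from_digits_iff[OF assms(2)] .
  also have "\<dots> \<longleftrightarrow> even (from_digits b (digits b n))"
    using even_from_digits_iff[OF assms(2)] by simp
  finally show ?thesis using from_digits_digits[OF assms(1)] by simp
qed

lemma wARH_power_plus_1:
  assumes "b \<ge> 2" "m > 0"
  shows "wARH b (b ^ m + 1)"
proof -
  have "b ^ m \<ge> 2"
    using assms power_increasing[of 1 m b] by simp
  then have "b ^ m - 2 + 2 = b ^ m" by simp
  then have "b ^ m + 1 = (b ^ m - 2 + 2) + rev_num b (b ^ m - 2 + 2)"
    using rev_num_power[OF assms(1)] by simp
  then show ?thesis
    unfolding wARH_def digit_sum_power_plus_1[OF assms] by (metis add_gr_0 zero_less_one)
qed

lemma MRH_even_digit_sum_imp_even: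
  assumes "MRH b N" "even (digit_sum b N)"
  shows "even N"
  using assms unfolding MRH_def by auto

lemma MRH_even_digit_sum_odd_base_imp_4_dvd:
  assumes "b \<ge> 2" "odd b" "MRH b N" "even (digit_sum b N)"
  shows "4 dvd N"
proof -
  obtain M where N: "N = (M * digit_sum b N) * rev_num b (M * digit_sum b N)"
    using assms(3) unfolding MRH_def by blast
  obtain s where s: "digit_sum b N = 2 * s" using assms(4) by blast
  have "even (rev_num b (M * digit_sum b N))"
    using even_rev_num_iff[OF assms(1,2)] assms(4) by simp
  then obtain r where "rev_num b (M * digit_sum b N) = 2 * r" by blast
  then have "N = 4 * (M * s * r)" using N s by simp
  then show ?thesis by simp
qed

lemma odd_power_2_mod_4: "odd (b :: nat) \<Longrightarrow> b ^ (2 * k) mod 4 = 1"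
proof -
  assume "odd b"
  then obtain c where "b = 2 * c + 1" by (blast elim: oddE)
  then have "b ^ 2 = 4 * (c * c + c) + 1" by (simp add: power2_eq_square algebra_simps)
  then have "b ^ 2 mod 4 = 1" by simp
  then show ?thesis using power_mod[of "b ^ 2" 4 k] by (simp add: power_mult)
qed

lemma not_MRH_even_power_plus_1:
  assumes "b \<ge> 2" "k \<ge> 1"
  shows "\<not> MRH b (b ^ (2 * k) + 1)"
proof
  assume MRH: "MRH b (b ^ (2 * k) + 1)"
  have even_digit_sum: "even (digit_sum b (b ^ (2 * k) + 1))"
    using digit_sum_power_plus_1[OF assms(1), of "2 * k"] assms(2) by simp
  show False
  proof (cases "even b")
    case True
    then show False
      using MRH_even_digit_sum_imp_even[OF MRH even_digit_sum] assms(2) by simp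
  next
    case False
    have "(b ^ (2 * k) + 1) mod 4 = 2"
      using odd_power_2_mod_4[OF False, of k] by presburger
    then show False
      using MRH_even_digit_sum_odd_base_imp_4_dvd[OF assms(1) False MRH even_digit_sum] by simp
  qed
qed

theorem proposition10:
  fixes b :: nat
  assumes "b \<ge> 2"
  shows "infinite {N::nat. wARH b N \<and> \<not> MRH b N}"
proof -
  define f where "f k = b ^ (2 * Suc k) + 1" for k
  have "strict_mono f"
    unfolding f_def using assms by (intro strict_monoI) (simp add: power_strict_increasing)
  then have "infinite (range f)"
    using finite_imageD strict_mono_imp_inj_on infinite_UNIV_nat by blast
  moreover have "f k \<in> {N. wARH b N \<and> \<not> MRH b N}" for k
    unfolding f_def
    using wARH_power_plus_1[OF assms, of "2 * Suc k"] not_MRH_even_power_plus_1[OF assms, of "Suc k"]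
    by simp
  ultimately show ?thesis by (meson image_subsetI infinite_super)
qed

end
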